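(* Let $n>2$ be an integer and $M\in\mathrm{Mat}(2,\mathbb{Z})$ with $\det(M)\equiv-1\pmod n$, and suppose $M$ is reversible mod $n$. Then $M^2\equiv\mathbb{1}\pmod n$ if $n$ is odd, and $M^2\equiv\mathbb{1}\pmod{n/2}$ if $n$ is even.
   Context: An integer matrix $M$ whose determinant is a unit mod $n$ is reversible mod $n$ if there exists $R\in\mathrm{GL}(2,\mathbb{Z}/n\mathbb{Z})$ with $RMR^{-1}\equiv M^{-1}\pmod n$, where $M^{-1}$ is the inverse of $M$ over $\mathbb{Z}/n\mathbb{Z}$. *)

theory Defs
  imports "HOL-Analysis.Analysis" "HOL-Number_Theory.Cong"
begin

definition mat_cong :: "int \<Rightarrow> int^2^2 \<Rightarrow> int^2^2 \<Rightarrow> bool" where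
  "mat_cong n A B \<longleftrightarrow> (\<forall>i j. [A $ i $ j = B $ i $ j] (mod n))"

definition is_inv_mod :: "int \<Rightarrow> int^2^2 \<Rightarrow> int^2^2 \<Rightarrow> bool" where
  "is_inv_mod n A N \<longleftrightarrow> mat_cong n (A ** N) (mat 1) \<and> mat_cong n (N ** A) (mat 1)"

definition reversible_mod :: "int \<Rightarrow> int^2^2 \<Rightarrow> bool" where
  "reversible_mod n M \<longleftrightarrow> coprime (det M) n \<and>
     (\<exists>R Rinv Minv. is_inv_mod n R Rinv \<and> is_inv_mod n M Minv \<and>
        mat_cong n (R ** M ** Rinv) Minv)"

end

theory Submission
  imports Defs
begin

text \<open>Conjugation preserves the trace, so reversibility forces \<open>tr M \<equiv> tr M\<^sup>-\<^sup>1\<close>.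
  For \<open>det M \<equiv> -1\<close> the inverse is \<open>-adj M\<close>, whose trace is \<open>-tr M\<close>; hence \<open>n\<close> divides
  \<open>2 tr M\<close>. By Cayley--Hamilton \<open>M\<^sup>2 = tr M \<cdot> M - det M \<cdot> 1 \<equiv> tr M \<cdot> M + 1\<close>, so \<open>M\<^sup>2 \<equiv> 1\<close>
  modulo every common divisor of \<open>n\<close> and \<open>tr M\<close>, which is \<open>n\<close> for odd \<open>n\<close> and \<open>n/2\<close> for even \<open>n\<close>.\<close>

lemma matrix_matrix_mult_2:
  "(A ** (B::'a::semiring_1^2^2)) $ i $ j = A$i$1 * B$1$j + A$i$2 * B$2$j"
  by (simp add: matrix_matrix_mult_def sum_2)

lemma trace_2: "trace (A::'a::semiring_1^2^2) = A$1$1 + A$2$2"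
  by (simp add: trace_def UNIV_2)

lemma mat_1_2:
  "(mat 1 :: 'a::zero_neq_one^2^2)$1$1 = 1" "(mat 1 :: 'a^2^2)$2$2 = 1"
  "(mat 1 :: 'a^2^2)$1$2 = 0" "(mat 1 :: 'a^2^2)$2$1 = 0"
  by (simp_all add: mat_def)

lemma mat_cong_iff_dvd:
  "mat_cong n A B \<longleftrightarrow>
     n dvd (A$1$1 - B$1$1) \<and> n dvd (A$1$2 - B$1$2) \<and> n dvd (A$2$1 - B$2$1) \<and> n dvd (A$2$2 - B$2$2)"
  unfolding mat_cong_def forall_2 cong_iff_dvd_diff by blast

lemma mat_cong_trace: "mat_cong n A B \<Longrightarrow> [trace A = trace B] (mod n)"
  unfolding mat_cong_def trace_2 by (simp add: cong_add)

lemma mat_cong_mult_right: "mat_cong n A B \<Longrightarrow> mat_cong n (A ** C) (B ** C)"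
  unfolding mat_cong_def matrix_matrix_mult_2 by (simp add: cong_add cong_mult)

lemma trace_conj_cong:
  assumes "is_inv_mod n R Rinv"
  shows "[trace (R ** M ** Rinv) = trace M] (mod n)"
proof -
  have "trace (R ** M ** Rinv) = trace ((Rinv ** R) ** M)"
    using trace_mul_sym[of "R ** M" Rinv] by (simp add: matrix_mul_assoc)
  also have "[trace ((Rinv ** R) ** M) = trace (mat 1 ** M)] (mod n)"
    using assms unfolding is_inv_mod_def by (blast intro: mat_cong_trace mat_cong_mult_right)
  finally show ?thesis by simp
qed

lemma trace_inverse_cong:
  assumes "[det M = -1] (mod n)" and "is_inv_mod n M Minv"
  shows "[trace Minv = - trace M] (mod n)"
proof -
  define a b c d where "a = M$1$1" "b = M$1$2" "c = M$2$1" "d = M$2$2"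
  define p q r s where "p = Minv$1$1" "q = Minv$1$2" "r = Minv$2$1" "s = Minv$2$2"
  have det: "n dvd (a*d - b*c + 1)"
    using assms(1) unfolding cong_iff_dvd_diff det_2 a_b_c_d_def by simp
  have inv: "n dvd (a * p + b * r - 1)" "n dvd (a * q + b * s)" "n dvd (c * p + d * r)"
    "n dvd (c * q + d * s - 1)"
    using assms(2) unfolding is_inv_mod_def mat_cong_iff_dvd matrix_matrix_mult_2 mat_1_2
      a_b_c_d_def p_q_r_s_def by auto
  \<comment> \<open>\<open>Minv \<equiv> -adj M\<close>, entry by entry from \<open>M Minv \<equiv> 1\<close> and \<open>det M \<equiv> -1\<close>\<close>
  have "p + d = p * (a * d - b * c + 1) - d * (a * p + b * r - 1) + b * (c * p + d * r)"
    "s + a = s * (a * d - b * c + 1) - a * (c * q + d * s - 1) + c * (a * q + b * s)"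
    by algebra+
  then have "n dvd (p + d) + (s + a)"
    using det inv by (metis dvd_add dvd_diff dvd_mult)
  moreover have "trace Minv - - trace M = (p + d) + (s + a)"
    unfolding trace_2 a_b_c_d_def p_q_r_s_def by simp
  ultimately show ?thesis
    by (simp add: cong_iff_dvd_diff)
qed

lemma reversible_mod_dvd_double_trace:
  assumes "[det M = -1] (mod n)" and "reversible_mod n M"
  shows "n dvd 2 * trace M"
proof -
  obtain R Rinv Minv where R: "is_inv_mod n R Rinv" and Minv: "is_inv_mod n M Minv"
    and conj: "mat_cong n (R ** M ** Rinv) Minv"
    using assms(2) unfolding reversible_mod_def by blast
  have "[trace M = trace (R ** M ** Rinv)] (mod n)"
    using trace_conj_cong[OF R] by (rule cong_sym)
  also have "[trace (R ** M ** Rinv) = trace Minv] (mod n)"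
    using conj by (rule mat_cong_trace)
  also have "[trace Minv = - trace M] (mod n)"
    using assms(1) Minv by (rule trace_inverse_cong)
  finally show ?thesis
    by (simp add: cong_iff_dvd_diff)
qed

lemma cayley_hamilton_2:
  "((M::'a::comm_ring_1^2^2) ** M) $ i $ j = trace M * M$i$j - det M * mat 1 $ i $ j"
proof -
  have "i = 1 \<or> i = 2" "j = 1 \<or> j = 2"
    using exhaust_2 by blast+
  then show ?thesis
    unfolding matrix_matrix_mult_2 trace_2 det_2
    by (elim disjE) (simp_all add: mat_1_2 algebra_simps)
qed

lemma square_cong_one_if_dvd_trace:
  assumes "[det M = -1] (mod m)" and "m dvd trace M"
  shows "mat_cong m (M ** M) (mat 1)"
  unfolding mat_cong_def cayley_hamilton_2
proof (intro allI)
  fix i j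
  have "m dvd det M + 1"
    using assms(1) by (simp add: cong_iff_dvd_diff)
  then have "m dvd trace M * M$i$j - (det M + 1) * mat 1 $ i $ j"
    using assms(2) by (intro dvd_diff dvd_mult2)
  moreover have "trace M * M$i$j - det M * mat 1 $ i $ j - mat 1 $ i $ j
      = trace M * M$i$j - (det M + 1) * mat 1 $ i $ j"
    by (simp add: algebra_simps)
  ultimately show "[trace M * M$i$j - det M * mat 1 $ i $ j = mat 1 $ i $ j] (mod m)"
    unfolding cong_iff_dvd_diff by (simp only:)
qed

theorem corollary4p10:
  fixes n :: int and M :: "int^2^2"
  assumes "n > 2"
    and "[det M = -1] (mod n)"
    and "reversible_mod n M"
  shows "(odd n \<longrightarrow> mat_cong n (M ** M) (mat 1)) \<and>
         (even n \<longrightarrow> mat_cong (n div 2) (M ** M) (mat 1))"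
proof -
  have trace: "n dvd 2 * trace M"
    using assms(2,3) by (rule reversible_mod_dvd_double_trace)
  show ?thesis
  proof (intro conjI impI)
    assume "odd n"
    then have "n dvd trace M"
      using trace by (simp add: coprime_dvd_mult_right_iff)
    then show "mat_cong n (M ** M) (mat 1)"
      using assms(2) by (rule square_cong_one_if_dvd_trace[rotated])
  next
    assume "even n"
    then obtain k where n: "n = 2 * k" by blast
    have "[det M = -1] (mod k)"
      using assms(2) n by (metis cong_dvd_modulus dvd_triv_right)
    moreover have "k dvd trace M"
      using trace n by simp
    ultimately show "mat_cong (n div 2) (M ** M) (mat 1)"
      using n by (simp add: square_cong_one_if_dvd_trace)
  qed
qed

end
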